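(* Let $p\in(1,\frac32)$, $q\in[1,\infty)$, $s_p=2-\frac3p$, and let $\theta,s,\tilde p,\tilde q$ satisfy: $\theta\in(0,1)$, $s_p=(1-\theta)s$, $\frac1p=\frac\theta2+\frac{1-\theta}{\tilde p}$, $\tilde p\in(1,\frac32)$, $\tilde q\in[1,\infty]$ and $$\frac1{\tilde q}=\begin{cases}\frac1{1-\theta}\big(\frac1q-\frac\theta2\big), & q>p,\\[2pt] \frac1{\tilde p}, & q\le p.\end{cases}$$ Then there is an absolute constant $C$ such that for every divergence-free vector field $f\in F\dot B^{s_p}_{p,q}(\mathbb R^3)$ and every $j\in\mathbb Z$ there exist divergence-free vector fields $g_0\in F\dot B^{s}_{\tilde p,\tilde q}(\mathbb R^3)$ and $h_0\in L^2(\mathbb R^3)$ with $f=g_0+h_0$, $$\|g_0\|_{F\dot B^{s}_{\tilde p,\tilde q}}\le C2^{-j\theta}\|f\|_{F\dot B^{s_p}_{p,q}},\qquad \|h_0\|_{L^2}\le C2^{j(1-\theta)}\|f\|_{F\dot B^{s_p}_{p,q}}.$$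
   Context: $\|f\|_{FL^p}=\|\hat f\|_{L^p}$; $\dot\Delta_j$ are homogeneous Littlewood–Paley blocks ($\dot\Delta_jf=\phi_j*f$, $\phi_j=2^{3j}\phi(2^j\cdot)$, $\hat\phi$ supported in $\{3/4\le|\xi|\le 8/3\}$, $\sum_j\hat\phi(2^{-j}\xi)=1$ for $\xi\ne0$). $F\dot B^s_{p,q}(\mathbb R^3)$ is the space of distributions modulo polynomials with $\|f\|_{F\dot B^s_{p,q}}=\|(2^{js}\|\dot\Delta_jf\|_{FL^p})_j\|_{\ell^q(\mathbb Z)}<\infty$. *)

theory Defs
  imports "HOL-Analysis.Analysis"
begin

text \<open>Everything is formulated on the Fourier side: a (tempered) vector field f on R^3,
  taken modulo polynomials, is represented by its Fourier transform F = hat f,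
  a measurable function R^3 -> C^3 (its value on the null set {0} is irrelevant,
  which is exactly the quotient by polynomials).  Phi stands for hat phi.\<close>

definition FLp_int :: "real \<Rightarrow> (real^3 \<Rightarrow> complex^3) \<Rightarrow> ennreal" where
  "FLp_int p G = (\<integral>\<^sup>+ \<xi>. ennreal (norm (G \<xi>) powr p) \<partial>lborel)"

definition FLp_mem :: "real \<Rightarrow> (real^3 \<Rightarrow> complex^3) \<Rightarrow> bool" where
  "FLp_mem p G \<longleftrightarrow> G \<in> borel_measurable lborel \<and> FLp_int p G < \<infinity>"

definition FLp_norm :: "real \<Rightarrow> (real^3 \<Rightarrow> complex^3) \<Rightarrow> real" where
  "FLp_norm p G = (enn2real (FLp_int p G)) powr (1 / p)"

definition LP_block :: "(real^3 \<Rightarrow> real) \<Rightarrow> int \<Rightarrow> (real^3 \<Rightarrow> complex^3) \<Rightarrow> (real^3 \<Rightarrow> complex^3)" where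
  "LP_block \<Phi> j F = (\<lambda>\<xi>. \<Phi> (2 powr (- real_of_int j) *\<^sub>R \<xi>) *\<^sub>R F \<xi>)"

definition lq_mem :: "ereal \<Rightarrow> (int \<Rightarrow> real) \<Rightarrow> bool" where
  "lq_mem q a \<longleftrightarrow> (if q = \<infinity> then bdd_above (range (\<lambda>j. \<bar>a j\<bar>))
                    else (\<lambda>j. \<bar>a j\<bar> powr real_of_ereal q) summable_on UNIV)"

definition lq_norm :: "ereal \<Rightarrow> (int \<Rightarrow> real) \<Rightarrow> real" where
  "lq_norm q a = (if q = \<infinity> then (SUP j. \<bar>a j\<bar>)
                  else (\<Sum>\<^sub>\<infinity>j. \<bar>a j\<bar> powr real_of_ereal q) powr (1 / real_of_ereal q))"

definition FB_seq :: "real \<Rightarrow> real \<Rightarrow> (real^3 \<Rightarrow> real) \<Rightarrow> (real^3 \<Rightarrow> complex^3) \<Rightarrow> int \<Rightarrow> real" where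
  "FB_seq s p \<Phi> F = (\<lambda>j. 2 powr (real_of_int j * s) * FLp_norm p (LP_block \<Phi> j F))"

definition FB_mem :: "real \<Rightarrow> real \<Rightarrow> ereal \<Rightarrow> (real^3 \<Rightarrow> real) \<Rightarrow> (real^3 \<Rightarrow> complex^3) \<Rightarrow> bool" where
  "FB_mem s p q \<Phi> F \<longleftrightarrow> F \<in> borel_measurable lborel \<and>
     (\<forall>j. FLp_mem p (LP_block \<Phi> j F)) \<and> lq_mem q (FB_seq s p \<Phi> F)"

definition FB_norm :: "real \<Rightarrow> real \<Rightarrow> ereal \<Rightarrow> (real^3 \<Rightarrow> real) \<Rightarrow> (real^3 \<Rightarrow> complex^3) \<Rightarrow> real" where
  "FB_norm s p q \<Phi> F = lq_norm q (FB_seq s p \<Phi> F)"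

definition div_free :: "(real^3 \<Rightarrow> complex^3) \<Rightarrow> bool" where
  "div_free F \<longleftrightarrow> (AE \<xi> in lborel. (\<Sum>k\<in>UNIV. complex_of_real (\<xi> $ k) * (F \<xi> $ k)) = 0)"

end

theory Submission
  imports Defs
begin

(* The field is split on the Fourier side by its size, shell by shell: on the dyadic shell
   2^i <= |xi| < 2^(i+1) the large part keeps the values with |F| > tau_i and the small part the
   others; both parts are scalar multiples of F, hence divergence free.  Only the blocks
   Delta_(i-1), Delta_i, Delta_(i+1) see the shell i, so |F| <= 3 |Delta_m F| for one of them, and
     |small part|^2 <= tau_i^(2-p) |F|^p,     |Delta_k (large part)|^pt <= tau_i^(pt-p) |F|^p
   (the second because pt < p).  Integrating reduces both norms to sums of
   tau_i^e ||Delta_m F||_p^p = tau_i^e 2^(-m(2p-3)) a_m^p, where a is the Besov sequence of F.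
   With N = ||a||_(l^q), r = max p q and A_i the maximum of a over |m - i| <= 3, the level
     tau_i = N mu 2^(alpha i) (A_i/N)^beta,     alpha = (2p-3)/(2-p),  beta = (r-p)/(2-p)
   makes the powers of 2 cancel up to bounded factors and leaves the sequence (A_i/N)^r, which is
   summable because l^q embeds in l^r; in the bound for the k-th block of the large part the
   exponent of A_k/N is r/qt, which is what the choice of qt is for.  The free scale
   mu = 2^(2j(1-theta)/(2-p)) produces the factors 2^(j(1-theta)) and 2^(-j theta). *)

section \<open>Dyadic shells and the splitting of a field\<close>

definition dyadic_shell :: "real^3 \<Rightarrow> int" where
  "dyadic_shell \<xi> = \<lfloor>log 2 (norm \<xi>)\<rfloor>"

lemma dyadic_shell_bounds:
  assumes "\<xi> \<noteq> 0"
  shows "2 powr real_of_int (dyadic_shell \<xi>) \<le> norm \<xi>" "norm \<xi> < 2 powr real_of_int (dyadic_shell \<xi> + 1)"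
  using floor_log_eq_powr_iff[of "norm \<xi>" 2 "dyadic_shell \<xi>"] assms unfolding dyadic_shell_def by auto

lemma dyadic_shell_measurable [measurable]: "dyadic_shell \<in> borel \<rightarrow>\<^sub>M count_space UNIV"
  unfolding dyadic_shell_def by (rule measurable_compose[OF _ measurable_real_floor]) measurable

lemma pred_dyadic_shell [measurable]: "Measurable.pred borel (\<lambda>\<xi>. P (dyadic_shell \<xi>))"
  by (rule measurable_compose[OF dyadic_shell_measurable]) simp

lemma norm_LP_block: "norm (LP_block \<Phi> m F \<xi>) = \<bar>\<Phi> (2 powr (- real_of_int m) *\<^sub>R \<xi>)\<bar> * norm (F \<xi>)"
  unfolding LP_block_def by simp

lemma LP_block_measurable [measurable]:
  assumes [measurable]: "\<Phi> \<in> borel_measurable borel" "F \<in> borel_measurable borel"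
  shows "LP_block \<Phi> m F \<in> borel_measurable borel"
proof -
  have [measurable]: "(\<lambda>\<xi>. \<Phi> (2 powr (- real_of_int m) *\<^sub>R \<xi>)) \<in> borel_measurable borel"
    by (rule measurable_compose[of _ _ borel]) auto
  show ?thesis unfolding LP_block_def by measurable
qed

definition large_part :: "(int \<Rightarrow> real) \<Rightarrow> (real^3 \<Rightarrow> complex^3) \<Rightarrow> real^3 \<Rightarrow> complex^3" where
  "large_part \<tau> F \<xi> = (if \<xi> \<noteq> 0 \<and> \<tau> (dyadic_shell \<xi>) < norm (F \<xi>) then F \<xi> else 0)"

definition small_part :: "(int \<Rightarrow> real) \<Rightarrow> (real^3 \<Rightarrow> complex^3) \<Rightarrow> real^3 \<Rightarrow> complex^3" where
  "small_part \<tau> F \<xi> = (if \<xi> \<noteq> 0 \<and> norm (F \<xi>) \<le> \<tau> (dyadic_shell \<xi>) then F \<xi> else 0)"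

lemma AE_eq_large_part_plus_small_part: "AE \<xi> in lborel. F \<xi> = large_part \<tau> F \<xi> + small_part \<tau> F \<xi>"
  using AE_lborel_singleton[of 0] by eventually_elim (auto simp: large_part_def small_part_def)

lemma div_free_large_part: "div_free F \<Longrightarrow> div_free (large_part \<tau> F)"
  unfolding div_free_def large_part_def by (erule eventually_mono) auto

lemma div_free_small_part: "div_free F \<Longrightarrow> div_free (small_part \<tau> F)"
  unfolding div_free_def small_part_def by (erule eventually_mono) auto

lemma large_part_measurable [measurable]:
  assumes [measurable]: "F \<in> borel_measurable borel"
  shows "large_part \<tau> F \<in> borel_measurable borel"
proof -
  have "(\<lambda>\<xi>. (\<lambda>i \<xi>. if \<xi> \<noteq> 0 \<and> \<tau> i < norm (F \<xi>) then F \<xi> else 0) (dyadic_shell \<xi>) \<xi>) \<in> borel_measurable borel"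
    by (rule measurable_compose_countable[OF _ dyadic_shell_measurable]) measurable
  thus ?thesis unfolding large_part_def[abs_def] by simp
qed

lemma small_part_measurable [measurable]:
  assumes [measurable]: "F \<in> borel_measurable borel"
  shows "small_part \<tau> F \<in> borel_measurable borel"
proof -
  have "(\<lambda>\<xi>. (\<lambda>i \<xi>. if \<xi> \<noteq> 0 \<and> norm (F \<xi>) \<le> \<tau> i then F \<xi> else 0) (dyadic_shell \<xi>) \<xi>) \<in> borel_measurable borel"
    by (rule measurable_compose_countable[OF _ dyadic_shell_measurable]) measurable
  thus ?thesis unfolding small_part_def[abs_def] by simp
qed

lemma nn_integral_nonneg_lincomb:
  assumes "finite S" and "\<And>m. m \<in> S \<Longrightarrow> 0 \<le> c m"
    and "\<And>m. m \<in> S \<Longrightarrow> f m \<in> borel_measurable M" and "\<And>m x. 0 \<le> f m x"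
    and "\<And>m. m \<in> S \<Longrightarrow> (\<integral>\<^sup>+x. ennreal (f m x) \<partial>M) = ennreal (I m)" and "\<And>m. 0 \<le> I m"
  shows "(\<integral>\<^sup>+x. ennreal (\<Sum>m\<in>S. c m * f m x) \<partial>M) = ennreal (\<Sum>m\<in>S. c m * I m)"
proof -
  have "(\<integral>\<^sup>+x. ennreal (\<Sum>m\<in>S. c m * f m x) \<partial>M) = (\<integral>\<^sup>+x. (\<Sum>m\<in>S. ennreal (c m) * ennreal (f m x)) \<partial>M)"
    using assms by (intro nn_integral_cong) (simp add: ennreal_mult sum_nonneg flip: sum_ennreal)
  also have "\<dots> = (\<Sum>m\<in>S. \<integral>\<^sup>+x. ennreal (c m) * ennreal (f m x) \<partial>M)"
    using assms by (intro nn_integral_sum) auto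
  also have "\<dots> = (\<Sum>m\<in>S. ennreal (c m) * ennreal (I m))"
    using assms by (intro sum.cong refl) (simp add: nn_integral_cmult)
  also have "\<dots> = ennreal (\<Sum>m\<in>S. c m * I m)"
    using assms by (simp add: ennreal_mult sum_nonneg flip: sum_ennreal)
  finally show ?thesis .
qed

lemma FLp_mem_and_norm_le:
  assumes "G \<in> borel_measurable borel" "FLp_int p G \<le> ennreal B" "0 \<le> B" "0 < p"
  shows "FLp_mem p G \<and> FLp_norm p G \<le> B powr (1/p)"
  using assms unfolding FLp_mem_def FLp_norm_def
  by (auto simp: top_unique intro: le_less_trans powr_mono2 enn2real_leI)

lemma FLp_int_LP_block_eq_FB_seq:
  assumes "FLp_mem p (LP_block \<Phi> m F)" "0 < p"
  shows "FLp_int p (LP_block \<Phi> m F) = ennreal (2 powr (- real_of_int m * s * p) * FB_seq s p \<Phi> F m powr p)"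
proof -
  have "FB_seq s p \<Phi> F m powr p = 2 powr (real_of_int m * s * p) * enn2real (FLp_int p (LP_block \<Phi> m F))"
    unfolding FB_seq_def FLp_norm_def using assms(2) by (simp add: powr_mult powr_powr)
  hence "2 powr (- real_of_int m * s * p) * FB_seq s p \<Phi> F m powr p = enn2real (FLp_int p (LP_block \<Phi> m F))"
    by (simp add: powr_minus field_simps)
  thus ?thesis using assms(1) unfolding FLp_mem_def by simp
qed

lemma FLp_int_LP_block_critical:
  assumes "FB_mem (2 - 3/p) p (ereal q) \<Phi> F" "0 < p"
  shows "FLp_int p (LP_block \<Phi> m F) = ennreal (2 powr (- real_of_int m * (2*p-3)) * FB_seq (2 - 3/p) p \<Phi> F m powr p)"
proof -
  have "- real_of_int m * (2 - 3/p) * p = - real_of_int m * (2*p-3)" using assms(2) by (simp add: field_simps)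
  thus ?thesis using FLp_int_LP_block_eq_FB_seq[of p \<Phi> m F "2 - 3/p"] assms unfolding FB_mem_def by metis
qed

lemma sum_powr_le_lq_norm_powr_self:
  fixes a :: "int \<Rightarrow> real"
  assumes a: "lq_mem (ereal q) a" "\<And>m. 0 \<le> a m" and q: "0 < q" and S: "finite S"
  shows "(\<Sum>i\<in>S. a i powr q) \<le> lq_norm (ereal q) a powr q"
proof -
  have a_summable: "(\<lambda>j. \<bar>a j\<bar> powr q) summable_on UNIV" using a(1) unfolding lq_mem_def by simp
  have "(\<Sum>i\<in>S. a i powr q) = (\<Sum>\<^sub>\<infinity>i\<in>S. \<bar>a i\<bar> powr q)" using a(2) S by simp
  also have "\<dots> \<le> (\<Sum>\<^sub>\<infinity>j. \<bar>a j\<bar> powr q)" by (rule infsum_mono2) (use S a_summable in auto)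
  also have "\<dots> = lq_norm (ereal q) a powr q"
    using q unfolding lq_norm_def by (simp add: powr_powr infsum_nonneg)
  finally show ?thesis .
qed

lemma lq_norm_ge_entry:
  fixes a :: "int \<Rightarrow> real"
  assumes a: "lq_mem (ereal q) a" "\<And>m. 0 \<le> a m" and q: "0 < q"
  shows "a m \<le> lq_norm (ereal q) a"
proof -
  have N: "0 \<le> lq_norm (ereal q) a" unfolding lq_norm_def by simp
  have "a m powr q \<le> lq_norm (ereal q) a powr q"
    using sum_powr_le_lq_norm_powr_self[OF a q, of "{m}"] by simp
  hence "(a m powr q) powr (1/q) \<le> (lq_norm (ereal q) a powr q) powr (1/q)"
    using a(2) q by (intro powr_mono2[where a="1/q"]) auto
  thus ?thesis using a(2)[of m] N q by (simp add: powr_powr)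
qed

lemma sum_powr_le_lq_norm_powr:
  fixes a :: "int \<Rightarrow> real"
  assumes a: "lq_mem (ereal q) a" "\<And>m. 0 \<le> a m" and q: "0 < q" "q \<le> r" and S: "finite S"
  shows "(\<Sum>i\<in>S. a i powr r) \<le> lq_norm (ereal q) a powr r"
proof -
  define N where "N = lq_norm (ereal q) a"
  have entry: "a i \<le> N" for i unfolding N_def using lq_norm_ge_entry[OF a q(1)] .
  have "a i powr r \<le> a i powr q * N powr (r - q)" for i
  proof (cases "a i = 0")
    case False
    hence "a i powr r = a i powr q * a i powr (r - q)" using a(2)[of i] by (simp add: powr_add[symmetric])
    also have "\<dots> \<le> a i powr q * N powr (r - q)" using a(2)[of i] entry[of i] q
      by (intro mult_left_mono powr_mono2) auto
    finally show ?thesis .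
  qed simp
  hence "(\<Sum>i\<in>S. a i powr r) \<le> (\<Sum>i\<in>S. a i powr q) * N powr (r - q)"
    by (simp add: sum_distrib_right sum_mono)
  also have "\<dots> \<le> N powr q * N powr (r - q)"
    using sum_powr_le_lq_norm_powr_self[OF a q(1) S] unfolding N_def by (intro mult_right_mono) auto
  also have "\<dots> \<le> N powr r"
    using q entry[of 0] a(2)[of 0] by (cases "N = 0") (auto simp: powr_add[symmetric])
  finally show ?thesis unfolding N_def .
qed

lemma FB_seq_nonneg: "0 \<le> FB_seq s p \<Phi> F m"
  unfolding FB_seq_def FLp_norm_def by simp

lemma FB_seq_le_FB_norm:
  assumes "FB_mem s p (ereal q) \<Phi> F" "0 < q"
  shows "FB_seq s p \<Phi> F m \<le> FB_norm s p (ereal q) \<Phi> F"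
  using assms unfolding FB_mem_def FB_norm_def by (auto intro!: lq_norm_ge_entry FB_seq_nonneg)

lemma FB_norm_nonneg:
  assumes "FB_mem s p (ereal q) \<Phi> F" "0 < q"
  shows "0 \<le> FB_norm s p (ereal q) \<Phi> F"
  using FB_seq_le_FB_norm[OF assms] FB_seq_nonneg order_trans by blast

lemma lq_mem_norm_le_of_sum_powr_le:
  fixes c :: "int \<Rightarrow> real" and Q M :: real
  assumes sums: "\<And>S. finite S \<Longrightarrow> (\<Sum>k\<in>S. \<bar>c k\<bar> powr Q) \<le> M" and Q: "0 < Q"
  shows "lq_mem (ereal Q) c \<and> lq_norm (ereal Q) c \<le> M powr (1/Q)"
proof -
  have "bdd_above (sum (\<lambda>k. \<bar>c k\<bar> powr Q) ` {S. S \<subseteq> UNIV \<and> finite S})"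
    by (rule bdd_aboveI2) (use sums in auto)
  hence c_summable: "(\<lambda>k. \<bar>c k\<bar> powr Q) summable_on UNIV"
    by (intro nonneg_bdd_above_summable_on) auto
  have "(\<Sum>\<^sub>\<infinity>k. \<bar>c k\<bar> powr Q) \<le> M"
    by (rule infsum_le_finite_sums[OF c_summable]) (use sums in auto)
  hence "(\<Sum>\<^sub>\<infinity>k. \<bar>c k\<bar> powr Q) powr (1/Q) \<le> M powr (1/Q)"
    using Q by (intro powr_mono2) (auto intro!: infsum_nonneg)
  thus ?thesis unfolding lq_mem_def lq_norm_def using c_summable by simp
qed

lemma lq_bound_by_powr_summable:
  fixes c A :: "int \<Rightarrow> real" and K B r \<rho> :: real and qt :: ereal
  assumes c: "\<And>k. 0 \<le> c k" "\<And>k. c k \<le> K * A k powr (r * \<rho>)" and A: "\<And>k. 0 \<le> A k"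
    and sums: "\<And>S. finite S \<Longrightarrow> (\<Sum>k\<in>S. A k powr r) \<le> B" and B: "1 \<le> B"
    and qt: "1 \<le> qt" "1 / qt = ereal \<rho>" and K: "0 \<le> K"
  shows "lq_mem qt c \<and> lq_norm qt c \<le> B * K"
proof (cases qt)
  case PInf
  hence \<rho>: "\<rho> = 0" using qt by simp
  have c_le: "\<bar>c k\<bar> \<le> B * K" for k
  proof -
    have "c k \<le> K" using c(2)[of k] K unfolding \<rho> by (simp split: if_splits)
    also have "K \<le> B * K" using mult_right_mono[OF B K] by simp
    finally show ?thesis using c(1)[of k] by simp
  qed
  have "bdd_above (range (\<lambda>j. \<bar>c j\<bar>))" by (rule bdd_aboveI2) (rule c_le)
  moreover have "(SUP j. \<bar>c j\<bar>) \<le> B * K" using c_le by (intro cSUP_least) auto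
  ultimately show ?thesis unfolding lq_mem_def lq_norm_def using PInf by simp
next
  case (real Q)
  have Q: "1 \<le> Q" using qt real by simp
  have \<rho>: "\<rho> = 1 / Q" using qt real Q by (simp add: one_ereal_def)
  have "(\<Sum>k\<in>S. \<bar>c k\<bar> powr Q) \<le> B * K powr Q" if "finite S" for S
  proof -
    have "\<bar>c k\<bar> powr Q \<le> (K * A k powr (r * \<rho>)) powr Q" for k
      using c[of k] Q by (intro powr_mono2) auto
    also have "(K * A k powr (r * \<rho>)) powr Q = K powr Q * A k powr r" for k
      using K A[of k] Q unfolding \<rho> by (simp add: powr_mult powr_powr)
    finally have "(\<Sum>k\<in>S. \<bar>c k\<bar> powr Q) \<le> K powr Q * (\<Sum>k\<in>S. A k powr r)"
      unfolding sum_distrib_left by (intro sum_mono)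
    also have "\<dots> \<le> K powr Q * B" using sums[OF that] by (intro mult_left_mono) auto
    finally show ?thesis by (simp add: mult.commute)
  qed
  hence "lq_mem qt c \<and> lq_norm qt c \<le> (B * K powr Q) powr (1/Q)"
    using lq_mem_norm_le_of_sum_powr_le[of c Q] Q real by auto
  moreover have "(B * K powr Q) powr (1/Q) = B powr (1/Q) * K" using K B Q by (simp add: powr_mult powr_powr)
  moreover have "B powr (1/Q) * K \<le> B * K"
    using B Q K by (intro mult_right_mono) (auto intro: order_trans[OF powr_mono[of "1/Q" 1]])
  ultimately show ?thesis by simp
next
  case MInf
  thus ?thesis using qt by simp
qed

text \<open>The radius 3 covers every index gap \<open>\<bar>m - i\<bar> \<le> 3\<close> that occurs in the estimate of
  a block of the large part.\<close>
definition window_max :: "(int \<Rightarrow> real) \<Rightarrow> int \<Rightarrow> real" where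
  "window_max a i = Max ((\<lambda>e. a (i + e)) ` {-3..3})"

lemma window_max_ge: "\<bar>m - i\<bar> \<le> 3 \<Longrightarrow> a m \<le> window_max a i"
  unfolding window_max_def by (rule Max_ge) (auto intro!: image_eqI[where x="m - i"])

lemma window_max_nonneg:
  assumes "\<And>m. 0 \<le> a m"
  shows "0 \<le> window_max a i"
  using assms[of i] window_max_ge[of i i a] by simp

lemma window_max_attained: "\<exists>e\<in>{-3..3}. window_max a i = a (i + e)"
proof -
  have "window_max a i \<in> (\<lambda>e. a (i + e)) ` {-3..3}" unfolding window_max_def by (rule Max_in) auto
  thus ?thesis by auto
qed

lemma window_max_le: "(\<And>m. a m \<le> N) \<Longrightarrow> window_max a i \<le> N"
  using window_max_attained[of a i] by auto

lemma sum_shifts_le: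
  fixes g :: "int \<Rightarrow> real"
  assumes "finite I" "finite E" "\<And>S. finite S \<Longrightarrow> (\<Sum>i\<in>S. g i) \<le> B"
  shows "(\<Sum>i\<in>I. \<Sum>e\<in>E. g (i + e)) \<le> real (card E) * B"
proof -
  have "(\<Sum>i\<in>I. \<Sum>e\<in>E. g (i + e)) = (\<Sum>e\<in>E. \<Sum>i\<in>(\<lambda>i. i + e) ` I. g i)"
    by (subst sum.swap) (simp add: sum.reindex inj_on_def)
  also have "\<dots> \<le> (\<Sum>e\<in>E. B)" using assms by (intro sum_mono) auto
  finally show ?thesis by simp
qed

lemma sum_window_max_powr_le:
  fixes a :: "int \<Rightarrow> real"
  assumes "\<And>S. finite S \<Longrightarrow> (\<Sum>i\<in>S. a i powr r) \<le> B" "finite S"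
  shows "(\<Sum>i\<in>S. window_max a i powr r) \<le> 7 * B"
proof -
  have "window_max a i powr r \<le> (\<Sum>e\<in>{-3..3}. a (i + e) powr r)" for i
  proof -
    obtain e where "e \<in> {-3..3}" "window_max a i = a (i + e)" using window_max_attained by blast
    thus ?thesis by (auto intro: member_le_sum[where f="\<lambda>e. a (i + e) powr r"])
  qed
  hence "(\<Sum>i\<in>S. window_max a i powr r) \<le> (\<Sum>i\<in>S. \<Sum>e\<in>{-3..3}. a (i + e) powr r)"
    by (rule sum_mono)
  also have "\<dots> \<le> card {-3..3::int} * B" using assms by (intro sum_shifts_le) auto
  finally show ?thesis by simp
qed

lemma sum_window_max_FB_seq_le:
  assumes F: "FB_mem s p (ereal q) \<Phi> F" and q: "0 < q" "q \<le> r" and S: "finite S"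
  defines "N \<equiv> FB_norm s p (ereal q) \<Phi> F"
  shows "(\<Sum>i\<in>S. (window_max (FB_seq s p \<Phi> F) i / N) powr r) \<le> 7"
proof (cases "N = 0")
  case False
  let ?A = "window_max (FB_seq s p \<Phi> F)"
  have N: "0 < N" using False FB_norm_nonneg[OF F q(1)] unfolding N_def by linarith
  have A: "0 \<le> ?A i" for i by (intro window_max_nonneg FB_seq_nonneg)
  have "(\<Sum>i\<in>S. (?A i / N) powr r) = (\<Sum>i\<in>S. ?A i powr r) / N powr r"
    using A N by (simp add: powr_divide sum_divide_distrib)
  also have "\<dots> \<le> 7 * N powr r / N powr r"
    using F q S unfolding N_def FB_norm_def
    by (intro divide_right_mono sum_window_max_powr_le sum_powr_le_lq_norm_powr)
      (auto simp: FB_mem_def intro: FB_seq_nonneg)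
  finally show ?thesis using N by simp
qed simp

lemma sum_neighbours_le:
  fixes g :: "int \<Rightarrow> real"
  assumes "finite I" "\<And>S. finite S \<Longrightarrow> (\<Sum>i\<in>S. g i) \<le> B"
  shows "(\<Sum>m\<in>I. \<Sum>i\<in>{m-1..m+1}. g i) \<le> 3 * B"
proof -
  have "(\<Sum>i\<in>{m-1..m+1}. g i) = (\<Sum>e\<in>{-1..1}. g (m + e))" for m
  proof -
    have "{m-1..m+1} = {m-1, m, m+1}" "{-1..1::int} = {-1, 0, 1}" by auto
    thus ?thesis by (simp add: algebra_simps)
  qed
  hence "(\<Sum>m\<in>I. \<Sum>i\<in>{m-1..m+1}. g i) = (\<Sum>m\<in>I. \<Sum>e\<in>{-1..1}. g (m + e))" by simp
  also have "\<dots> \<le> card {-1..1::int} * B" using assms by (intro sum_shifts_le) auto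
  finally show ?thesis by simp
qed

section \<open>The splitting level\<close>

lemma interpolation_exponents:
  fixes p \<theta> pt s r :: real
  assumes p: "1 < p" "p < 3/2" and \<theta>: "0 < \<theta>" "\<theta> < 1"
    and s: "2 - 3/p = (1 - \<theta>) * s" and pt_rel: "1/p = \<theta>/2 + (1 - \<theta>)/pt" and pt: "1 < pt" and r: "0 < r"
  shows "s * pt + (2*p-3)/(2-p) * (pt - p) = 2*p - 3"
    and "(r-p)/(2-p) * (pt - p) + p = r * pt * ((1/r - \<theta>/2)/(1-\<theta>))"
    and "pt < p"
proof -
  have pt_eq: "2 * pt = \<theta> * p * pt + 2 * (1 - \<theta>) * p"
    using pt_rel p pt \<theta> by (simp add: field_simps)
  have s_eq: "s = (2*p - 3) / (p * (1 - \<theta>))" using s p \<theta> by (simp add: field_simps)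
  have "pt * (2 - p) = (2 - pt) * (p * (1 - \<theta>))" using pt_eq by algebra
  hence pt_frac: "pt / (p * (1 - \<theta>)) = (2 - pt) / (2 - p)" using p \<theta> by (simp add: frac_eq_eq)
  have "s * pt + (2*p-3)/(2-p) * (pt - p) = (2*p - 3) * (pt / (p * (1 - \<theta>)) + (pt - p) / (2 - p))"
    unfolding s_eq by (simp add: field_simps)
  also have "\<dots> = (2*p - 3) * ((2 - pt + (pt - p)) / (2 - p))" unfolding pt_frac add_divide_distrib ..
  also have "\<dots> = 2*p - 3" using p by simp
  finally show "s * pt + (2*p-3)/(2-p) * (pt - p) = 2*p - 3" .
  have "2*(1-\<theta>)*(r-p)*(pt-p) + 2*p*(1-\<theta>)*(2-p) = pt*(2-r*\<theta>)*(2-p)" using pt_eq by algebra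
  thus "(r-p)/(2-p) * (pt - p) + p = r * pt * ((1/r - \<theta>/2)/(1-\<theta>))"
    using p \<theta> r by (simp add: field_simps) algebra
  have "\<theta> / 2 < \<theta> / p" using p \<theta> by (intro divide_strict_left_mono) auto
  hence "(1 - \<theta>) / p < (1 - \<theta>) / pt" using pt_rel by (simp add: diff_divide_distrib)
  thus "pt < p" using \<theta> p pt divide_left_mono[of p pt "1 - \<theta>"] by fastforce
qed

lemma scale_exponents:
  fixes p \<theta> pt x :: real
  assumes p: "0 < p" "p < 2" and pt: "0 < pt" and pt_rel: "1/p = \<theta>/2 + (1 - \<theta>)/pt"
  shows "x * (2*(1-\<theta>)/(2-p)) * ((pt-p)/pt) = - x * \<theta>"
    and "x * (2*(1-\<theta>)/(2-p)) * ((2-p)/2) = x * (1 - \<theta>)"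
proof -
  have gap: "2 * (1 - \<theta>) * (pt - p) = - \<theta> * pt * (2 - p)" using pt_rel p pt by (simp add: field_simps)
  have "x * (2*(1-\<theta>)/(2-p)) * ((pt-p)/pt) = x * (2 * (1 - \<theta>) * (pt - p)) / ((2-p) * pt)" by simp
  also have "\<dots> = - x * \<theta>" unfolding gap using p pt by simp
  finally show "x * (2*(1-\<theta>)/(2-p)) * ((pt-p)/pt) = - x * \<theta>" .
  show "x * (2*(1-\<theta>)/(2-p)) * ((2-p)/2) = x * (1 - \<theta>)" using p by (simp add: field_simps)
qed

lemma inverse_qt_eq:
  fixes p q \<theta> pt :: real and qt :: ereal
  assumes pt_rel: "1/p = \<theta>/2 + (1 - \<theta>)/pt" and \<theta>: "\<theta> < 1"
    and qt_rel: "1 / qt = (if q > p then ereal (1/(1 - \<theta>) * (1/q - \<theta>/2)) else ereal (1/pt))"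
  shows "1 / qt = ereal ((1 / max p q - \<theta>/2) / (1 - \<theta>))"
proof (cases "q > p")
  case False
  have "1/pt = (1/p - \<theta>/2) / (1 - \<theta>)" using pt_rel \<theta> by simp
  thus ?thesis using qt_rel False by simp
qed (use qt_rel in simp)

lemma abs_slope_times_gap_le_1:
  fixes p pt :: real
  assumes p: "1 < p" "p < 3/2" and pt: "1 < pt" "pt < p"
  shows "\<bar>(2*p-3)/(2-p) * (pt - p)\<bar> \<le> 1"
proof -
  have eq: "(2*p-3)/(2-p) * (pt - p) = (3-2*p)*(p-pt)/(2-p)" using p by (simp add: field_simps)
  have "(3-2*p)*(p-pt) \<le> (3-2*p)*(p-1)" using p pt by (intro mult_left_mono) auto
  also have "\<dots> \<le> 2 - p"
    using zero_le_power2[of "p - 3/2"] by (simp add: power2_eq_square algebra_simps)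
  finally have "(3-2*p)*(p-pt)/(2-p) \<le> 1" using p by simp
  moreover have "0 \<le> (3-2*p)*(p-pt)/(2-p)" using p pt by simp
  ultimately show ?thesis unfolding eq by (metis abs_of_nonneg)
qed

lemma shell_gap_exponent_le_3:
  fixes i k m :: int
  assumes p: "1 < p" "p < 3/2" and s: "s * pt + \<alpha> * (pt - p) = 2*p - 3" and \<alpha>: "\<bar>\<alpha> * (pt - p)\<bar> \<le> 1"
    and ik: "\<bar>i - k\<bar> \<le> 1" and mk: "\<bar>m - k\<bar> \<le> 2"
  shows "real_of_int k * s * pt + \<alpha> * real_of_int i * (pt-p) + - real_of_int m * (2*p-3) \<le> 3"
proof -
  have "real_of_int k * s * pt = real_of_int k * (2*p - 3 - \<alpha> * (pt - p))" using s by simp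
  hence "real_of_int k * s * pt + \<alpha> * real_of_int i * (pt-p) + - real_of_int m * (2*p-3)
      = (real_of_int k - real_of_int m) * (2*p-3) + (real_of_int i - real_of_int k) * (\<alpha> * (pt - p))"
    by (simp add: algebra_simps)
  moreover have "\<bar>(real_of_int k - real_of_int m) * (2*p-3)\<bar> \<le> 2 * 1"
    unfolding abs_mult using mk p by (intro mult_mono) auto
  moreover have "\<bar>(real_of_int i - real_of_int k) * (\<alpha> * (pt - p))\<bar> \<le> 1 * 1"
    unfolding abs_mult using ik \<alpha> by (intro mult_mono) auto
  ultimately show ?thesis by linarith
qed

text \<open>If the
  window maximum vanishes, so do the blocks that see this shell, hence \<open>F\<close> vanishes there almost
  everywhere and the value \<open>1\<close> is arbitrary (it only has to be positive).\<close>
definition threshold :: "real \<Rightarrow> real \<Rightarrow> real \<Rightarrow> real \<Rightarrow> (int \<Rightarrow> real) \<Rightarrow> int \<Rightarrow> real" where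
  "threshold \<mu> \<alpha> \<beta> N a i =
    (if 0 < window_max a i then N * \<mu> * 2 powr (\<alpha> * real_of_int i) * (window_max a i / N) powr \<beta> else 1)"

lemma threshold_pos:
  assumes "0 < \<mu>" "\<And>m. a m \<le> N"
  shows "0 < threshold \<mu> \<alpha> \<beta> N a i"
  using assms window_max_le[of a N i] by (simp add: threshold_def)

lemma threshold_powr:
  assumes "0 < window_max a i" "0 < N" "0 < \<mu>"
  shows "threshold \<mu> \<alpha> \<beta> N a i powr e =
    N powr e * \<mu> powr e * 2 powr (\<alpha> * real_of_int i * e) * (window_max a i / N) powr (\<beta> * e)"
  using assms by (simp add: threshold_def powr_mult powr_powr)

lemma small_part_term_le:
  fixes a :: "int \<Rightarrow> real"
  assumes a: "\<And>m. 0 \<le> a m" "\<And>m. a m \<le> N" and p: "1 < p" "p < 3/2" and r: "p \<le> r"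
    and \<mu>: "0 < \<mu>" and im: "\<bar>i - m\<bar> \<le> 1"
  shows "threshold \<mu> ((2*p-3)/(2-p)) ((r-p)/(2-p)) N a i powr (2-p) * (2 powr (- real_of_int m * (2*p-3)) * a m powr p)
     \<le> 2 * \<mu> powr (2-p) * N powr 2 * (window_max a i / N) powr r"
proof (cases "a m = 0")
  case False
  let ?\<alpha> = "(2*p-3)/(2-p)" and ?\<beta> = "(r-p)/(2-p)"
  define y where "y = window_max a i / N"
  have am: "0 < a m" and am_A: "a m \<le> window_max a i" using False a(1)[of m] im by (auto intro: window_max_ge)
  have A: "0 < window_max a i" "window_max a i \<le> N" using am am_A window_max_le[of a N i] a(2) by auto
  have N: "0 < N" and y: "0 < y" using A unfolding y_def by auto
  have "a m powr p \<le> (N * y) powr p" using am am_A N p by (intro powr_mono2) (auto simp: y_def)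
  also have "\<dots> = N powr p * y powr p" using N y by (simp add: powr_mult)
  finally have am_powr: "a m powr p \<le> N powr p * y powr p" .
  have "threshold \<mu> ?\<alpha> ?\<beta> N a i powr (2-p) * (2 powr (- real_of_int m * (2*p-3)) * a m powr p)
      \<le> (N powr (2-p) * \<mu> powr (2-p) * 2 powr (?\<alpha> * real_of_int i * (2-p)) * y powr (?\<beta> * (2-p)))
        * (2 powr (- real_of_int m * (2*p-3)) * (N powr p * y powr p))"
    unfolding threshold_powr[OF A(1) N \<mu>] y_def[symmetric] using am_powr by (intro mult_left_mono) auto
  also have "\<dots> = \<mu> powr (2-p) * (N powr (2-p) * N powr p)
      * (2 powr (?\<alpha> * real_of_int i * (2-p)) * 2 powr (- real_of_int m * (2*p-3))) * (y powr (?\<beta> * (2-p)) * y powr p)"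
    by (simp only: mult_ac)
  also have "\<dots> = \<mu> powr (2-p) * N powr 2 * 2 powr ((real_of_int i - real_of_int m) * (2*p-3)) * y powr r"
  proof -
    have "?\<alpha> * real_of_int i * (2-p) + - real_of_int m * (2*p-3) = (real_of_int i - real_of_int m) * (2*p-3)"
      using p by (simp add: field_simps)
    moreover have "?\<beta> * (2-p) + p = r" using p by simp
    ultimately show ?thesis by (simp add: powr_add[symmetric])
  qed
  also have "\<dots> \<le> \<mu> powr (2-p) * N powr 2 * 2 powr 1 * y powr r"
  proof -
    have "\<bar>(real_of_int i - real_of_int m) * (2*p-3)\<bar> \<le> 1 * 1"
      unfolding abs_mult using im p by (intro mult_mono) auto
    hence "2 powr ((real_of_int i - real_of_int m) * (2*p-3)) \<le> 2 powr 1" by (intro powr_mono) auto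
    thus ?thesis by (intro mult_right_mono mult_left_mono) auto
  qed
  finally show ?thesis by (simp add: y_def mult_ac)
qed simp

lemma large_part_term_le:
  fixes a :: "int \<Rightarrow> real" and i k m :: int
  assumes a: "\<And>m. 0 \<le> a m" "\<And>m. a m \<le> N" and p: "1 < p" "p < 3/2" and pt: "pt < p"
    and \<beta>: "0 \<le> \<beta>" and \<gamma>: "0 \<le> \<gamma>" "\<beta> * (pt - p) + p = \<gamma>"
    and s: "s * pt + \<alpha> * (pt - p) = 2*p - 3" and \<alpha>: "\<bar>\<alpha> * (pt - p)\<bar> \<le> 1" and \<mu>: "0 < \<mu>"
    and ik: "\<bar>i - k\<bar> \<le> 1" and mk: "\<bar>m - k\<bar> \<le> 2"
  shows "2 powr (real_of_int k * s * pt) * threshold \<mu> \<alpha> \<beta> N a i powr (pt-p) * (2 powr (- real_of_int m * (2*p-3)) * a m powr p)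
     \<le> 8 * \<mu> powr (pt-p) * N powr pt * (window_max a k / N) powr \<gamma>"
proof (cases "a m = 0")
  case False
  define y where "y = a m / N"
  define E where "E = real_of_int k * s * pt + \<alpha> * real_of_int i * (pt-p) + - real_of_int m * (2*p-3)"
  have am: "0 < a m" using False a(1)[of m] by linarith
  have N: "0 < N" using am a(2)[of m] by linarith
  have y: "0 < y" "a m = N * y" using am N unfolding y_def by auto
  have am_Ai: "a m \<le> window_max a i" and am_Ak: "a m \<le> window_max a k"
    using ik mk by (auto intro: window_max_ge)
  have Ai: "0 < window_max a i" "y \<le> window_max a i / N" and Ak: "y \<le> window_max a k / N"
    using am am_Ai am_Ak N by (auto simp: y_def divide_right_mono)
  \<comment> \<open>\<open>pt - p < 0\<close>: the threshold is bounded from below through \<open>a m \<le> window_max a i\<close>\<close>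
  have "(window_max a i / N) powr (\<beta> * (pt-p)) \<le> y powr (\<beta> * (pt-p))"
    using y Ai \<beta> pt by (intro powr_mono2') (auto simp: mult_nonneg_nonpos)
  hence "2 powr (real_of_int k * s * pt) * threshold \<mu> \<alpha> \<beta> N a i powr (pt-p) * (2 powr (- real_of_int m * (2*p-3)) * a m powr p)
      \<le> 2 powr (real_of_int k * s * pt) * (N powr (pt-p) * \<mu> powr (pt-p) * 2 powr (\<alpha> * real_of_int i * (pt-p)) * y powr (\<beta> * (pt-p)))
        * (2 powr (- real_of_int m * (2*p-3)) * (N powr p * y powr p))"
    unfolding threshold_powr[OF Ai(1) N \<mu>] y(2) powr_mult
    by (intro mult_right_mono mult_left_mono) auto
  also have "\<dots> = \<mu> powr (pt-p) * (N powr (pt-p) * N powr p)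
      * (2 powr (real_of_int k * s * pt) * 2 powr (\<alpha> * real_of_int i * (pt-p)) * 2 powr (- real_of_int m * (2*p-3)))
      * (y powr (\<beta> * (pt-p)) * y powr p)"
    by (simp only: mult_ac)
  also have "\<dots> = \<mu> powr (pt-p) * N powr pt * 2 powr E * y powr \<gamma>"
    using \<gamma>(2) unfolding E_def by (simp add: powr_add[symmetric])
  also have "\<dots> \<le> \<mu> powr (pt-p) * N powr pt * 2 powr 3 * (window_max a k / N) powr \<gamma>"
  proof -
    have "2 powr E \<le> 2 powr 3"
      using shell_gap_exponent_le_3[OF p s \<alpha> ik mk] unfolding E_def by (intro powr_mono) auto
    moreover have "y powr \<gamma> \<le> (window_max a k / N) powr \<gamma>" using y Ak \<gamma> by (intro powr_mono2) auto
    ultimately show ?thesis by (intro mult_mono) auto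
  qed
  finally show ?thesis by (simp add: mult_ac)
qed simp

section \<open>Estimates relative to a dyadic partition of unity\<close>

locale dyadic_partition =
  fixes \<Phi> :: "real^3 \<Rightarrow> real"
  assumes continuous: "continuous_on UNIV \<Phi>"
    and support: "\<And>\<xi>. \<Phi> \<xi> \<noteq> 0 \<Longrightarrow> 3/4 \<le> norm \<xi> \<and> norm \<xi> \<le> 8/3"
    and has_sum_1: "\<And>\<xi>. \<xi> \<noteq> 0 \<Longrightarrow> ((\<lambda>j::int. \<Phi> (2 powr (- real_of_int j) *\<^sub>R \<xi>)) has_sum 1) UNIV"
begin

lemma cutoff_measurable [measurable]: "\<Phi> \<in> borel_measurable borel"
  by (rule borel_measurable_continuous_onI[OF continuous])

definition cutoff_max :: real where
  "cutoff_max = (SUP \<xi>. \<bar>\<Phi> \<xi>\<bar>)"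

lemma bdd_above_abs_cutoff: "bdd_above (range (\<lambda>\<xi>. \<bar>\<Phi> \<xi>\<bar>))"
proof -
  have "compact (\<Phi> ` cball 0 (8/3))"
    by (rule compact_continuous_image) (use continuous continuous_on_subset in auto)
  then obtain B where B: "\<And>y. y \<in> \<Phi> ` cball 0 (8/3) \<Longrightarrow> norm y \<le> B"
    using compact_imp_bounded bounded_iff by metis
  have "\<bar>\<Phi> \<xi>\<bar> \<le> max B 0" for \<xi>
  proof (cases "\<Phi> \<xi> = 0")
    case False
    hence "\<xi> \<in> cball 0 (8/3)" using support by auto
    thus ?thesis using B[of "\<Phi> \<xi>"] by auto
  qed simp
  thus ?thesis by (intro bdd_aboveI2)
qed

lemma abs_cutoff_le_cutoff_max: "\<bar>\<Phi> \<xi>\<bar> \<le> cutoff_max"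
  unfolding cutoff_max_def by (intro cSUP_upper bdd_above_abs_cutoff) simp

lemma cutoff_max_nonneg: "0 \<le> cutoff_max"
  using abs_cutoff_le_cutoff_max[of 0] by linarith

lemma cutoff_nonzero_imp_near_shell:
  assumes \<xi>: "\<xi> \<noteq> 0" and nz: "\<Phi> (2 powr (- real_of_int m) *\<^sub>R \<xi>) \<noteq> 0"
  shows "m \<in> {dyadic_shell \<xi> - 1..dyadic_shell \<xi> + 1}"
proof -
  let ?i = "dyadic_shell \<xi>"
  have scaled: "3/4 \<le> 2 powr (- real_of_int m) * norm \<xi>" "2 powr (- real_of_int m) * norm \<xi> \<le> 8/3"
    using support[OF nz] by auto
  have "2 powr real_of_int (?i - m) = 2 powr (- real_of_int m) * 2 powr real_of_int ?i"
    by (simp add: powr_add[symmetric])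
  also have "\<dots> \<le> 2 powr (- real_of_int m) * norm \<xi>"
    using dyadic_shell_bounds(1)[OF \<xi>] by simp
  also have "\<dots> < 2 powr 2" using scaled by simp
  finally have "real_of_int (?i - m) < 2" by (rule powr_less_cancel) simp
  have "2 powr (-1) < 2 powr (- real_of_int m) * norm \<xi>" using scaled by simp
  also have "\<dots> < 2 powr (- real_of_int m) * 2 powr real_of_int (?i + 1)"
    using dyadic_shell_bounds(2)[OF \<xi>] by simp
  also have "\<dots> = 2 powr real_of_int (?i + 1 - m)" by (simp add: powr_add[symmetric])
  finally have "-1 < real_of_int (?i + 1 - m)" by (rule powr_less_cancel) simp
  with \<open>real_of_int (?i - m) < 2\<close> show ?thesis by simp
qed

lemma cutoff_sum_near_shell:
  assumes "\<xi> \<noteq> 0"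
  shows "(\<Sum>m\<in>{dyadic_shell \<xi> - 1..dyadic_shell \<xi> + 1}. \<Phi> (2 powr (- real_of_int m) *\<^sub>R \<xi>)) = 1"
proof -
  let ?f = "\<lambda>j::int. \<Phi> (2 powr (- real_of_int j) *\<^sub>R \<xi>)" and ?S = "{dyadic_shell \<xi> - 1..dyadic_shell \<xi> + 1}"
  have "(?f has_sum 1) ?S"
    using has_sum_1[OF assms] by (rule has_sum_cong_neutral[THEN iffD1, rotated -1])
      (use cutoff_nonzero_imp_near_shell[OF assms] in force)+
  moreover have "(?f has_sum (\<Sum>m\<in>?S. ?f m)) ?S" by (rule has_sum_finite) simp
  ultimately show ?thesis using has_sum_unique by blast
qed

lemma norm_powr_le_LP_blocks_near_shell:
  assumes \<xi>: "\<xi> \<noteq> 0" and \<gamma>: "0 < \<gamma>"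
  shows "norm (F \<xi>) powr \<gamma> \<le> 3 powr \<gamma> * (\<Sum>m\<in>{dyadic_shell \<xi> - 1..dyadic_shell \<xi> + 1}. norm (LP_block \<Phi> m F \<xi>) powr \<gamma>)"
proof -
  let ?S = "{dyadic_shell \<xi> - 1..dyadic_shell \<xi> + 1}" and ?f = "\<lambda>m. \<Phi> (2 powr (- real_of_int m) *\<^sub>R \<xi>)"
  obtain m where m: "m \<in> ?S" "1/3 \<le> \<bar>?f m\<bar>"
  proof (rule ccontr)
    assume "\<not> thesis"
    hence small: "\<And>m. m \<in> ?S \<Longrightarrow> \<bar>?f m\<bar> < 1/3" using that by force
    have "1 = \<bar>\<Sum>m\<in>?S. ?f m\<bar>" using cutoff_sum_near_shell[OF \<xi>] by simp
    also have "\<dots> \<le> (\<Sum>m\<in>?S. \<bar>?f m\<bar>)" by (rule sum_abs)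
    also have "\<dots> < (\<Sum>m\<in>?S. 1/3)" by (rule sum_strict_mono) (use small in auto)
    finally show False by simp
  qed
  have "norm (F \<xi>) \<le> 3 * norm (LP_block \<Phi> m F \<xi>)"
    unfolding norm_LP_block using m(2) by (simp add: mult_le_cancel_right1 mult.assoc[symmetric])
  hence "norm (F \<xi>) powr \<gamma> \<le> 3 powr \<gamma> * norm (LP_block \<Phi> m F \<xi>) powr \<gamma>"
    using \<gamma> by (metis norm_ge_zero powr_mono2 powr_mult less_imp_le)
  also have "\<dots> \<le> 3 powr \<gamma> * (\<Sum>m\<in>?S. norm (LP_block \<Phi> m F \<xi>) powr \<gamma>)"
    by (intro mult_left_mono member_le_sum) (use m in auto)
  finally show ?thesis .
qed

lemma LP_block_large_part_powr_le:
  assumes \<tau>: "\<And>i. 0 < \<tau> i" and pt: "0 < pt" "pt \<le> p"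
  shows "norm (LP_block \<Phi> k (large_part \<tau> F) \<xi>) powr pt \<le>
    (\<Sum>m\<in>{k-2..k+2}. (cutoff_max powr pt * 3 powr p * (\<Sum>i\<in>{k-1..k+1}. \<tau> i powr (pt-p))) * norm (LP_block \<Phi> m F \<xi>) powr p)"
    (is "?lhs \<le> (\<Sum>m\<in>_. ?c * ?X m)")
proof (cases "\<Phi> (2 powr (- real_of_int k) *\<^sub>R \<xi>) = 0 \<or> large_part \<tau> F \<xi> = 0")
  case True
  hence "?lhs = 0" unfolding norm_LP_block by auto
  thus ?thesis by (simp add: sum_nonneg)
next
  case False
  let ?i = "dyadic_shell \<xi>" and ?M = "cutoff_max"
  have \<xi>: "\<xi> \<noteq> 0" and large: "\<tau> ?i < norm (F \<xi>)" and G: "large_part \<tau> F \<xi> = F \<xi>"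
    using False unfolding large_part_def by (auto split: if_splits)
  have k: "k \<in> {?i - 1..?i + 1}" using cutoff_nonzero_imp_near_shell[OF \<xi>] False by blast
  have F_pos: "0 < norm (F \<xi>)" using large \<tau>[of ?i] by linarith
  have "?lhs \<le> (?M * norm (F \<xi>)) powr pt"
    unfolding norm_LP_block G using abs_cutoff_le_cutoff_max pt by (intro powr_mono2 mult_right_mono) auto
  also have "\<dots> = ?M powr pt * (norm (F \<xi>) powr (pt - p) * norm (F \<xi>) powr p)"
    using cutoff_max_nonneg F_pos by (simp add: powr_mult powr_add[symmetric])
  also have "\<dots> \<le> ?M powr pt * (\<tau> ?i powr (pt - p) * (3 powr p * (\<Sum>m\<in>{?i - 1..?i + 1}. ?X m)))"
  proof -
    have "norm (F \<xi>) powr (pt - p) \<le> \<tau> ?i powr (pt - p)"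
      using large \<tau>[of ?i] pt by (intro powr_mono2') auto
    moreover have "norm (F \<xi>) powr p \<le> 3 powr p * (\<Sum>m\<in>{?i - 1..?i + 1}. ?X m)"
      using norm_powr_le_LP_blocks_near_shell[OF \<xi>, of p F] pt by simp
    ultimately show ?thesis by (intro mult_left_mono mult_mono) auto
  qed
  also have "\<dots> \<le> ?M powr pt * ((\<Sum>i\<in>{k-1..k+1}. \<tau> i powr (pt-p)) * (3 powr p * (\<Sum>m\<in>{k-2..k+2}. ?X m)))"
  proof -
    have "\<tau> ?i powr (pt - p) \<le> (\<Sum>i\<in>{k-1..k+1}. \<tau> i powr (pt-p))"
      by (rule member_le_sum) (use k in auto)
    moreover have "(\<Sum>m\<in>{?i - 1..?i + 1}. ?X m) \<le> (\<Sum>m\<in>{k-2..k+2}. ?X m)"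
      by (rule sum_mono2) (use k in auto)
    ultimately show ?thesis
      by (intro mult_left_mono mult_mono) (auto intro!: sum_nonneg mult_nonneg_nonneg)
  qed
  also have "\<dots> = (\<Sum>m\<in>{k-2..k+2}. ?c * ?X m)"
    by (simp add: sum_distrib_left algebra_simps)
  finally show ?thesis .
qed

lemma small_part_square_le:
  assumes \<tau>: "\<And>i. 0 < \<tau> i" and p: "0 < p" "p \<le> 2" and n: "\<bar>dyadic_shell \<xi>\<bar> \<le> int n"
  shows "norm (small_part \<tau> F \<xi>) powr 2 \<le>
    (\<Sum>m\<in>{- int n - 1..int n + 1}. (3 powr p * (\<Sum>i\<in>{m-1..m+1}. \<tau> i powr (2-p))) * norm (LP_block \<Phi> m F \<xi>) powr p)"
    (is "_ \<le> (\<Sum>m\<in>?I. ?c m * ?X m)")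
proof (cases "small_part \<tau> F \<xi> = 0")
  case True
  thus ?thesis by (simp add: sum_nonneg)
next
  case False
  let ?i = "dyadic_shell \<xi>"
  have \<xi>: "\<xi> \<noteq> 0" and small: "norm (F \<xi>) \<le> \<tau> ?i" and H: "small_part \<tau> F \<xi> = F \<xi>"
    using False unfolding small_part_def by (auto split: if_splits)
  have F_pos: "0 < norm (F \<xi>)" using False H by simp
  have "norm (small_part \<tau> F \<xi>) powr 2 = norm (F \<xi>) powr (2 - p) * norm (F \<xi>) powr p"
    unfolding H using F_pos by (simp add: powr_add[symmetric])
  also have "\<dots> \<le> \<tau> ?i powr (2 - p) * (3 powr p * (\<Sum>m\<in>{?i - 1..?i + 1}. ?X m))"
  proof -
    have "norm (F \<xi>) powr (2 - p) \<le> \<tau> ?i powr (2 - p)"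
      using small F_pos p by (intro powr_mono2) auto
    moreover have "norm (F \<xi>) powr p \<le> 3 powr p * (\<Sum>m\<in>{?i - 1..?i + 1}. ?X m)"
      using norm_powr_le_LP_blocks_near_shell[OF \<xi>, of p F] p by simp
    ultimately show ?thesis by (intro mult_mono) auto
  qed
  also have "\<dots> = (\<Sum>m\<in>{?i - 1..?i + 1}. (3 powr p * \<tau> ?i powr (2 - p)) * ?X m)"
    by (simp add: sum_distrib_left algebra_simps)
  also have "\<dots> \<le> (\<Sum>m\<in>{?i - 1..?i + 1}. ?c m * ?X m)"
  proof (rule sum_mono)
    fix m assume "m \<in> {?i - 1..?i + 1}"
    hence "\<tau> ?i powr (2 - p) \<le> (\<Sum>i\<in>{m-1..m+1}. \<tau> i powr (2-p))"
      by (intro member_le_sum) auto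
    thus "(3 powr p * \<tau> ?i powr (2 - p)) * ?X m \<le> ?c m * ?X m"
      by (intro mult_right_mono mult_left_mono) auto
  qed
  also have "\<dots> \<le> (\<Sum>m\<in>?I. ?c m * ?X m)"
    by (rule sum_mono2) (use n in \<open>auto intro!: mult_nonneg_nonneg sum_nonneg\<close>)
  finally show ?thesis .
qed

lemma FLp_int_LP_block_large_part_le:
  assumes \<tau>: "\<And>i. 0 < \<tau> i" and pt: "0 < pt" "pt \<le> p"
    and F [measurable]: "F \<in> borel_measurable borel"
    and b: "\<And>m. FLp_int p (LP_block \<Phi> m F) = ennreal (b m)" "\<And>m. 0 \<le> b m"
  shows "FLp_int pt (LP_block \<Phi> k (large_part \<tau> F)) \<le>
    ennreal (\<Sum>m\<in>{k-2..k+2}. (cutoff_max powr pt * 3 powr p * (\<Sum>i\<in>{k-1..k+1}. \<tau> i powr (pt-p))) * b m)"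
proof -
  let ?c = "cutoff_max powr pt * 3 powr p * (\<Sum>i\<in>{k-1..k+1}. \<tau> i powr (pt-p))"
  have "FLp_int pt (LP_block \<Phi> k (large_part \<tau> F)) \<le>
     (\<integral>\<^sup>+\<xi>. ennreal (\<Sum>m\<in>{k-2..k+2}. ?c * norm (LP_block \<Phi> m F \<xi>) powr p) \<partial>lborel)"
    unfolding FLp_int_def by (intro nn_integral_mono ennreal_leI LP_block_large_part_powr_le \<tau> pt)
  also have "\<dots> = ennreal (\<Sum>m\<in>{k-2..k+2}. ?c * b m)"
    using b unfolding FLp_int_def by (intro nn_integral_nonneg_lincomb) (auto intro!: sum_nonneg mult_nonneg_nonneg)
  finally show ?thesis .
qed

lemma FLp_int_small_part_le:
  assumes \<tau>: "\<And>i. 0 < \<tau> i" and p: "0 < p" "p \<le> 2"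
    and F [measurable]: "F \<in> borel_measurable borel"
    and b: "\<And>m. FLp_int p (LP_block \<Phi> m F) = ennreal (b m)" "\<And>m. 0 \<le> b m"
    and B: "\<And>n::nat. (\<Sum>m\<in>{- int n - 1..int n + 1}. (3 powr p * (\<Sum>i\<in>{m-1..m+1}. \<tau> i powr (2-p))) * b m) \<le> B"
  shows "FLp_int 2 (small_part \<tau> F) \<le> ennreal B"
proof -
  let ?I = "\<lambda>n::nat. {- int n - 1..int n + 1}" and ?c = "\<lambda>m. 3 powr p * (\<Sum>i\<in>{m-1..m+1}. \<tau> i powr (2-p))"
  \<comment> \<open>the pointwise bound only involves blocks near the shell of \<open>\<xi>\<close>: exhaust by the shells \<open>\<bar>i\<bar> \<le> n\<close>\<close>
  define f where "f n \<xi> = ennreal (if \<bar>dyadic_shell \<xi>\<bar> \<le> int n then norm (small_part \<tau> F \<xi>) powr 2 else 0)"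
    for n :: nat and \<xi>
  have f_measurable: "f n \<in> borel_measurable lborel" for n unfolding f_def by simp measurable
  have "incseq f" unfolding incseq_def le_fun_def f_def by (auto intro!: ennreal_leI)
  have "FLp_int 2 (small_part \<tau> F) \<le> (\<integral>\<^sup>+\<xi>. (SUP n. f n \<xi>) \<partial>lborel)"
    unfolding FLp_int_def
  proof (intro nn_integral_mono)
    fix \<xi>
    have "ennreal (norm (small_part \<tau> F \<xi>) powr 2) = f (nat \<bar>dyadic_shell \<xi>\<bar>) \<xi>" unfolding f_def by simp
    also have "\<dots> \<le> (SUP n. f n \<xi>)" by (rule SUP_upper) auto
    finally show "ennreal (norm (small_part \<tau> F \<xi>) powr 2) \<le> (SUP n. f n \<xi>)" .
  qed
  also have "\<dots> = (SUP n. \<integral>\<^sup>+\<xi>. f n \<xi> \<partial>lborel)"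
    by (rule nn_integral_monotone_convergence_SUP[OF \<open>incseq f\<close> f_measurable])
  also have "\<dots> \<le> ennreal B"
  proof (rule SUP_least)
    fix n
    have "(\<integral>\<^sup>+\<xi>. f n \<xi> \<partial>lborel) \<le> (\<integral>\<^sup>+\<xi>. ennreal (\<Sum>m\<in>?I n. ?c m * norm (LP_block \<Phi> m F \<xi>) powr p) \<partial>lborel)"
      unfolding f_def using small_part_square_le[OF \<tau> p]
      by (intro nn_integral_mono ennreal_leI) (auto intro!: sum_nonneg mult_nonneg_nonneg)
    also have "\<dots> = ennreal (\<Sum>m\<in>?I n. ?c m * b m)"
      using b unfolding FLp_int_def by (intro nn_integral_nonneg_lincomb) (auto intro!: sum_nonneg mult_nonneg_nonneg)
    also have "\<dots> \<le> ennreal B" by (intro ennreal_leI B)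
    finally show "(\<integral>\<^sup>+\<xi>. f n \<xi> \<partial>lborel) \<le> ennreal B" .
  qed
  finally show ?thesis .
qed

lemma small_part_bound:
  assumes F: "FB_mem (2 - 3/p) p (ereal q) \<Phi> F" and p: "1 < p" "p < 3/2" and q: "0 < q"
    and r: "p \<le> r" "q \<le> r" and \<mu>: "0 < \<mu>"
  defines "N \<equiv> FB_norm (2 - 3/p) p (ereal q) \<Phi> F"
  defines "H \<equiv> small_part (threshold \<mu> ((2*p-3)/(2-p)) ((r-p)/(2-p)) N (FB_seq (2 - 3/p) p \<Phi> F)) F"
  shows "FLp_mem 2 H \<and> FLp_norm 2 H \<le> (42 * 3 powr p) powr (1/2) * \<mu> powr ((2-p)/2) * N"
proof -
  define a where "a = FB_seq (2 - 3/p) p \<Phi> F"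
  define \<tau> where "\<tau> = threshold \<mu> ((2*p-3)/(2-p)) ((r-p)/(2-p)) N a"
  define b where "b m = 2 powr (- real_of_int m * (2*p-3)) * a m powr p" for m
  define B where "B = 42 * 3 powr p * \<mu> powr (2-p) * N powr 2"
  have a: "\<And>m. 0 \<le> a m" "\<And>m. a m \<le> N"
    unfolding a_def N_def using FB_seq_nonneg FB_seq_le_FB_norm[OF F q] by auto
  have \<tau>: "\<And>i. 0 < \<tau> i" unfolding \<tau>_def using threshold_pos[OF \<mu> a(2)] .
  have sums: "(\<Sum>m\<in>{- int n - 1..int n + 1}. (3 powr p * (\<Sum>i\<in>{m-1..m+1}. \<tau> i powr (2-p))) * b m) \<le> B" for n
  proof -
    let ?I = "{- int n - 1..int n + 1}" and ?c = "3 powr p * 2 * \<mu> powr (2-p) * N powr 2"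
    have "(\<Sum>m\<in>?I. (3 powr p * (\<Sum>i\<in>{m-1..m+1}. \<tau> i powr (2-p))) * b m)
        = (\<Sum>m\<in>?I. \<Sum>i\<in>{m-1..m+1}. 3 powr p * (\<tau> i powr (2-p) * b m))"
      by (simp only: mult.assoc sum_distrib_left sum_distrib_right)
    also have "\<dots> \<le> (\<Sum>m\<in>?I. \<Sum>i\<in>{m-1..m+1}. 3 powr p * (2 * \<mu> powr (2-p) * N powr 2 * (window_max a i / N) powr r))"
      unfolding \<tau>_def b_def using a p r \<mu> by (intro sum_mono mult_left_mono small_part_term_le) auto
    also have "\<dots> = ?c * (\<Sum>m\<in>?I. \<Sum>i\<in>{m-1..m+1}. (window_max a i / N) powr r)"
      by (simp only: mult.assoc sum_distrib_left)
    also have "\<dots> \<le> ?c * (3 * 7)"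
      using sum_window_max_FB_seq_le[OF F q(1) r(2)] unfolding a_def N_def
      by (intro mult_left_mono sum_neighbours_le) auto
    finally show ?thesis unfolding B_def by simp
  qed
  have b: "FLp_int p (LP_block \<Phi> m F) = ennreal (b m)" "0 \<le> b m" for m
    using FLp_int_LP_block_critical[OF F] p unfolding b_def a_def by auto
  have H: "H = small_part \<tau> F" unfolding H_def \<tau>_def a_def ..
  have "FLp_int 2 (small_part \<tau> F) \<le> ennreal B"
    using F p unfolding FB_mem_def by (intro FLp_int_small_part_le[OF \<tau> _ _ _ b sums]) auto
  hence "FLp_int 2 H \<le> ennreal B" unfolding H .
  hence "FLp_mem 2 H \<and> FLp_norm 2 H \<le> B powr (1/2)"
    using F unfolding H_def B_def FB_mem_def by (intro FLp_mem_and_norm_le) auto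
  moreover have "B powr (1/2) = (42 * 3 powr p) powr (1/2) * \<mu> powr ((2-p)/2) * N"
    unfolding B_def using \<mu> FB_norm_nonneg[OF F q] by (simp add: N_def powr_mult powr_powr)
  ultimately show ?thesis by simp
qed

lemma FLp_int_LP_block_large_part_scaled_le:
  assumes F: "FB_mem (2 - 3/p) p (ereal q) \<Phi> F" and p: "1 < p" "p < 3/2" and q: "0 < q"
    and r: "p \<le> r" and \<mu>: "0 < \<mu>" and \<theta>: "0 < \<theta>" "\<theta> < 1" and s: "2 - 3/p = (1 - \<theta>) * s"
    and pt_rel: "1/p = \<theta>/2 + (1 - \<theta>)/pt" and pt: "1 < pt" and \<rho>: "0 \<le> (1/r - \<theta>/2)/(1-\<theta>)"
  defines "N \<equiv> FB_norm (2 - 3/p) p (ereal q) \<Phi> F" and "a \<equiv> FB_seq (2 - 3/p) p \<Phi> F"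
  defines "G \<equiv> large_part (threshold \<mu> ((2*p-3)/(2-p)) ((r-p)/(2-p)) N a) F"
  obtains Y where "FLp_int pt (LP_block \<Phi> k G) \<le> ennreal Y" "0 \<le> Y"
    "2 powr (real_of_int k * s * pt) * Y \<le>
       120 * cutoff_max powr pt * 3 powr p * \<mu> powr (pt-p) * N powr pt * (window_max a k / N) powr (r * pt * ((1/r - \<theta>/2)/(1-\<theta>)))"
proof -
  define \<gamma> where "\<gamma> = r * pt * ((1/r - \<theta>/2)/(1-\<theta>))"
  define \<tau> where "\<tau> = threshold \<mu> ((2*p-3)/(2-p)) ((r-p)/(2-p)) N a"
  define b where "b m = 2 powr (- real_of_int m * (2*p-3)) * a m powr p" for m
  define c where "c = cutoff_max powr pt * 3 powr p"
  define Y where "Y = (\<Sum>m\<in>{k-2..k+2}. (c * (\<Sum>i\<in>{k-1..k+1}. \<tau> i powr (pt-p))) * b m)"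
  have a: "\<And>m. 0 \<le> a m" "\<And>m. a m \<le> N"
    unfolding a_def N_def using FB_seq_nonneg FB_seq_le_FB_norm[OF F q] by auto
  have \<tau>: "\<And>i. 0 < \<tau> i" unfolding \<tau>_def using threshold_pos[OF \<mu> a(2)] .
  have b: "FLp_int p (LP_block \<Phi> m F) = ennreal (b m)" "0 \<le> b m" for m
    using FLp_int_LP_block_critical[OF F] p unfolding b_def a_def by auto
  have e: "s * pt + (2*p-3)/(2-p) * (pt - p) = 2*p - 3" "(r-p)/(2-p) * (pt - p) + p = \<gamma>" "pt < p"
    using interpolation_exponents[OF p \<theta> s pt_rel pt, of r] p r unfolding \<gamma>_def by auto
  have "\<bar>(2*p-3)/(2-p) * (pt - p)\<bar> \<le> 1" using abs_slope_times_gap_le_1[OF p pt e(3)] .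
  moreover have "0 \<le> \<gamma>" unfolding \<gamma>_def using p r pt \<rho> by (intro mult_nonneg_nonneg) auto
  ultimately have term_le: "2 powr (real_of_int k * s * pt) * \<tau> i powr (pt-p) * b m \<le> 8 * \<mu> powr (pt-p) * N powr pt * (window_max a k / N) powr \<gamma>"
    if "i \<in> {k-1..k+1}" "m \<in> {k-2..k+2}" for i m
    unfolding \<tau>_def b_def using that a p r e \<mu> by (intro large_part_term_le) auto
  have block: "FLp_int pt (LP_block \<Phi> k G) \<le> ennreal Y"
    unfolding G_def Y_def c_def \<tau>_def[symmetric] using F pt e(3) unfolding FB_mem_def
    by (intro FLp_int_LP_block_large_part_le[OF \<tau> _ _ _ b]) auto
  have "0 \<le> Y" unfolding Y_def c_def using b(2) by (auto intro!: sum_nonneg mult_nonneg_nonneg)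
  moreover have "2 powr (real_of_int k * s * pt) * Y \<le> 120 * c * (\<mu> powr (pt-p) * N powr pt * (window_max a k / N) powr \<gamma>)"
  proof -
    have "2 powr (real_of_int k * s * pt) * Y
        = (\<Sum>m\<in>{k-2..k+2}. \<Sum>i\<in>{k-1..k+1}. c * (2 powr (real_of_int k * s * pt) * \<tau> i powr (pt-p) * b m))"
      unfolding Y_def by (simp add: sum_distrib_left sum_distrib_right mult_ac)
    also have "\<dots> \<le> (\<Sum>m\<in>{k-2..k+2}. \<Sum>i\<in>{k-1..k+1}. c * (8 * \<mu> powr (pt-p) * N powr pt * (window_max a k / N) powr \<gamma>))"
      using term_le unfolding c_def by (intro sum_mono mult_left_mono) auto
    also have "\<dots> = 120 * c * (\<mu> powr (pt-p) * N powr pt * (window_max a k / N) powr \<gamma>)"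
      by simp
    finally show ?thesis .
  qed
  ultimately show ?thesis using that[OF block] unfolding c_def \<gamma>_def by (simp only: mult.assoc)
qed

lemma FB_seq_large_part_le:
  assumes F: "FB_mem (2 - 3/p) p (ereal q) \<Phi> F" and p: "1 < p" "p < 3/2" and q: "0 < q"
    and r: "p \<le> r" and \<mu>: "0 < \<mu>" and \<theta>: "0 < \<theta>" "\<theta> < 1" and s: "2 - 3/p = (1 - \<theta>) * s"
    and pt_rel: "1/p = \<theta>/2 + (1 - \<theta>)/pt" and pt: "1 < pt" and \<rho>: "0 \<le> (1/r - \<theta>/2)/(1-\<theta>)"
  defines "N \<equiv> FB_norm (2 - 3/p) p (ereal q) \<Phi> F" and "a \<equiv> FB_seq (2 - 3/p) p \<Phi> F"
  defines "G \<equiv> large_part (threshold \<mu> ((2*p-3)/(2-p)) ((r-p)/(2-p)) N a) F"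
  shows "FLp_mem pt (LP_block \<Phi> k G) \<and>
    FB_seq s pt \<Phi> G k \<le> (120 * cutoff_max powr pt * 3 powr p) powr (1/pt) * \<mu> powr ((pt-p)/pt) * N
      * (window_max a k / N) powr (r * ((1/r - \<theta>/2)/(1-\<theta>)))"
proof -
  obtain Y where Y: "FLp_int pt (LP_block \<Phi> k G) \<le> ennreal Y" "0 \<le> Y"
    "2 powr (real_of_int k * s * pt) * Y \<le>
       120 * cutoff_max powr pt * 3 powr p * \<mu> powr (pt-p) * N powr pt * (window_max a k / N) powr (r * pt * ((1/r - \<theta>/2)/(1-\<theta>)))"
    using FLp_int_LP_block_large_part_scaled_le[OF F p q r \<mu> \<theta> s pt_rel pt \<rho>]
    unfolding G_def N_def a_def by blast
  have "0 \<le> N" unfolding N_def using FB_norm_nonneg[OF F q] .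
  have "G \<in> borel_measurable borel" using F unfolding G_def FB_mem_def by (intro large_part_measurable) simp
  hence mem: "FLp_mem pt (LP_block \<Phi> k G) \<and> FLp_norm pt (LP_block \<Phi> k G) \<le> Y powr (1/pt)"
    using Y pt by (intro FLp_mem_and_norm_le) auto
  hence "FB_seq s pt \<Phi> G k \<le> 2 powr (real_of_int k * s) * Y powr (1/pt)"
    unfolding FB_seq_def by (intro mult_left_mono) auto
  also have "\<dots> = (2 powr (real_of_int k * s * pt) * Y) powr (1/pt)"
    using pt by (simp add: powr_mult powr_powr)
  also have "\<dots> \<le> (120 * cutoff_max powr pt * 3 powr p * \<mu> powr (pt-p) * N powr pt
      * (window_max a k / N) powr (r * pt * ((1/r - \<theta>/2)/(1-\<theta>)))) powr (1/pt)"
    using Y(2,3) pt by (intro powr_mono2) auto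
  also have "\<dots> = (120 * cutoff_max powr pt * 3 powr p) powr (1/pt) * \<mu> powr ((pt-p)/pt) * N
      * (window_max a k / N) powr (r * ((1/r - \<theta>/2)/(1-\<theta>)))"
    using pt \<open>0 \<le> N\<close> cutoff_max_nonneg by (simp add: powr_mult powr_powr)
  finally show ?thesis using mem by simp
qed

lemma large_part_bound:
  assumes F: "FB_mem (2 - 3/p) p (ereal q) \<Phi> F" and p: "1 < p" "p < 3/2" and q: "0 < q"
    and r: "p \<le> r" "q \<le> r" and \<mu>: "0 < \<mu>" and \<theta>: "0 < \<theta>" "\<theta> < 1" and s: "2 - 3/p = (1 - \<theta>) * s"
    and pt_rel: "1/p = \<theta>/2 + (1 - \<theta>)/pt" and pt: "1 < pt"
    and qt: "1 \<le> qt" "1 / qt = ereal ((1/r - \<theta>/2)/(1-\<theta>))"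
  defines "N \<equiv> FB_norm (2 - 3/p) p (ereal q) \<Phi> F"
  defines "G \<equiv> large_part (threshold \<mu> ((2*p-3)/(2-p)) ((r-p)/(2-p)) N (FB_seq (2 - 3/p) p \<Phi> F)) F"
  shows "FB_mem s pt qt \<Phi> G \<and>
    FB_norm s pt qt \<Phi> G \<le> 7 * (120 * cutoff_max powr pt * 3 powr p) powr (1/pt) * \<mu> powr ((pt-p)/pt) * N"
proof -
  define \<rho> where "\<rho> = (1/r - \<theta>/2)/(1-\<theta>)"
  define a where "a = FB_seq (2 - 3/p) p \<Phi> F"
  define K where "K = (120 * cutoff_max powr pt * 3 powr p) powr (1/pt) * \<mu> powr ((pt-p)/pt) * N"
  have "0 \<le> 1 / qt" using qt(1) by (cases qt) auto
  hence "0 \<le> \<rho>" using qt(2) unfolding \<rho>_def by simp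
  note block = FB_seq_large_part_le[OF F p q r(1) \<mu> \<theta> s pt_rel pt this[unfolded \<rho>_def],
      folded N_def, folded G_def, folded a_def \<rho>_def K_def]
  have N: "0 \<le> N" unfolding N_def using FB_norm_nonneg[OF F q] .
  have lq: "lq_mem qt (FB_seq s pt \<Phi> G) \<and> lq_norm qt (FB_seq s pt \<Phi> G) \<le> 7 * K"
  proof (rule lq_bound_by_powr_summable)
    show "0 \<le> FB_seq s pt \<Phi> G k" for k by (rule FB_seq_nonneg)
    show "FB_seq s pt \<Phi> G k \<le> K * (window_max a k / N) powr (r * \<rho>)" for k using block by blast
    show "\<And>S. finite S \<Longrightarrow> (\<Sum>k\<in>S. (window_max a k / N) powr r) \<le> 7"
      unfolding a_def N_def using sum_window_max_FB_seq_le[OF F q r(2)] .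
    show "0 \<le> window_max a k / N" for k
      unfolding a_def using N by (simp add: window_max_nonneg FB_seq_nonneg)
    show "0 \<le> K" unfolding K_def using N by simp
  qed (use qt in \<open>auto simp: \<rho>_def\<close>)
  have "G \<in> borel_measurable borel" using F unfolding G_def FB_mem_def by (intro large_part_measurable) simp
  with block lq show ?thesis
    unfolding FB_mem_def FB_norm_def K_def by (auto simp only: mult.assoc measurable_lborel2)
qed

definition splitting_constant :: "real \<Rightarrow> real \<Rightarrow> real" where
  "splitting_constant p pt = max (7 * (120 * cutoff_max powr pt * 3 powr p) powr (1/pt)) ((42 * 3 powr p) powr (1/2))"

lemma splitting_bounds:
  fixes j :: int
  assumes F: "FB_mem (2 - 3/p) p (ereal q) \<Phi> F" "div_free F" and p: "1 < p" "p < 3/2" and q: "0 < q"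
    and r: "p \<le> r" "q \<le> r" and \<theta>: "0 < \<theta>" "\<theta> < 1" and s: "2 - 3/p = (1 - \<theta>) * s"
    and pt_rel: "1/p = \<theta>/2 + (1 - \<theta>)/pt" and pt: "1 < pt"
    and qt: "1 \<le> qt" "1 / qt = ereal ((1/r - \<theta>/2)/(1-\<theta>))"
  defines "N \<equiv> FB_norm (2 - 3/p) p (ereal q) \<Phi> F" and "C \<equiv> splitting_constant p pt"
  shows "\<exists>G H. FB_mem s pt qt \<Phi> G \<and> div_free G \<and> FLp_mem 2 H \<and> div_free H \<and>
    (AE \<xi> in lborel. F \<xi> = G \<xi> + H \<xi>) \<and>
    FB_norm s pt qt \<Phi> G \<le> C * 2 powr (- real_of_int j * \<theta>) * N \<and>
    FLp_norm 2 H \<le> C * 2 powr (real_of_int j * (1 - \<theta>)) * N"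
proof -
  define \<mu> where "\<mu> = 2 powr (real_of_int j * (2*(1-\<theta>)/(2-p)))"
  define \<tau> where "\<tau> = threshold \<mu> ((2*p-3)/(2-p)) ((r-p)/(2-p)) N (FB_seq (2 - 3/p) p \<Phi> F)"
  have \<mu>: "0 < \<mu>" unfolding \<mu>_def by simp
  have "0 < p" "p < 2" "0 < pt" using p pt by auto
  note scale = scale_exponents[OF this pt_rel, of "real_of_int j"]
  have \<mu>_large: "\<mu> powr ((pt-p)/pt) = 2 powr (- real_of_int j * \<theta>)"
    unfolding \<mu>_def powr_powr scale(1) ..
  have \<mu>_small: "\<mu> powr ((2-p)/2) = 2 powr (real_of_int j * (1 - \<theta>))"
    unfolding \<mu>_def powr_powr scale(2) ..
  have G: "FB_mem s pt qt \<Phi> (large_part \<tau> F)"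
      "FB_norm s pt qt \<Phi> (large_part \<tau> F) \<le> 7 * (120 * cutoff_max powr pt * 3 powr p) powr (1/pt) * 2 powr (- real_of_int j * \<theta>) * N"
    using large_part_bound[OF F(1) p q r \<mu> \<theta> s pt_rel pt qt]
    unfolding \<mu>_large N_def[symmetric] \<tau>_def[symmetric] by auto
  have H: "FLp_mem 2 (small_part \<tau> F)"
      "FLp_norm 2 (small_part \<tau> F) \<le> (42 * 3 powr p) powr (1/2) * 2 powr (real_of_int j * (1 - \<theta>)) * N"
    using small_part_bound[OF F(1) p q r \<mu>]
    unfolding \<mu>_small N_def[symmetric] \<tau>_def[symmetric] by auto
  have "0 \<le> N" unfolding N_def using FB_norm_nonneg[OF F(1) q] .
  hence "c * 2 powr x * N \<le> C * 2 powr x * N" if "c \<le> C" for c x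
    using that by (simp add: mult_right_mono)
  hence "FB_norm s pt qt \<Phi> (large_part \<tau> F) \<le> C * 2 powr (- real_of_int j * \<theta>) * N"
    "FLp_norm 2 (small_part \<tau> F) \<le> C * 2 powr (real_of_int j * (1 - \<theta>)) * N"
    using G(2) H(2) unfolding C_def splitting_constant_def by (meson max.cobounded1 max.cobounded2 order_trans)+
  with G(1) H(1) F(2) show ?thesis
    by (intro exI[of _ "large_part \<tau> F"] exI[of _ "small_part \<tau> F"])
      (simp add: div_free_large_part div_free_small_part AE_eq_large_part_plus_small_part)
qed

end

theorem lemma2p6:
  fixes p q \<theta> s pt :: real and qt :: ereal and \<Phi> :: "real^3 \<Rightarrow> real"
  assumes Phi_cont: "continuous_on UNIV \<Phi>"
    and Phi_supp: "\<forall>\<xi>. \<Phi> \<xi> \<noteq> 0 \<longrightarrow> 3/4 \<le> norm \<xi> \<and> norm \<xi> \<le> 8/3"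
    and Phi_sum: "\<forall>\<xi>. \<xi> \<noteq> 0 \<longrightarrow> ((\<lambda>j::int. \<Phi> (2 powr (- real_of_int j) *\<^sub>R \<xi>)) has_sum 1) UNIV"
    and p: "1 < p" "p < 3/2"
    and q: "1 \<le> q"
    and \<theta>: "0 < \<theta>" "\<theta> < 1"
    and s: "2 - 3/p = (1 - \<theta>) * s"
    and pt_rel: "1/p = \<theta>/2 + (1 - \<theta>)/pt"
    and pt: "1 < pt" "pt < 3/2"
    and qt: "1 \<le> qt"
    and qt_rel: "1 / qt = (if q > p then ereal (1/(1 - \<theta>) * (1/q - \<theta>/2)) else ereal (1/pt))"
  shows "\<exists>C::real. \<forall>F j::int. FB_mem (2 - 3/p) p (ereal q) \<Phi> F \<and> div_free F \<longrightarrow>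
           (\<exists>G H. FB_mem s pt qt \<Phi> G \<and> div_free G \<and> FLp_mem 2 H \<and> div_free H \<and>
                  (AE \<xi> in lborel. F \<xi> = G \<xi> + H \<xi>) \<and>
                  FB_norm s pt qt \<Phi> G \<le> C * 2 powr (- real_of_int j * \<theta>) * FB_norm (2 - 3/p) p (ereal q) \<Phi> F \<and>
                  FLp_norm 2 H \<le> C * 2 powr (real_of_int j * (1 - \<theta>)) * FB_norm (2 - 3/p) p (ereal q) \<Phi> F)"
proof -
  interpret dyadic_partition \<Phi>
    using Phi_cont Phi_supp Phi_sum by unfold_locales auto
  have r: "p \<le> max p q" "q \<le> max p q" and q: "0 < q" using p q by auto
  show ?thesis
    using splitting_bounds[OF _ _ p q r \<theta> s pt_rel pt(1) qt inverse_qt_eq[OF pt_rel \<theta>(2) qt_rel]]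
    by (intro exI[of _ "splitting_constant p pt"]) blast
qed

end
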